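(* For any real $C^1$ function $u$ on a domain in $\mathscr H$, at every point where $\mathrm{grad}\,u\ne0$, the $2$-element $d_0u\wedge d_1u$ is elementary strongly positive.
   Context: $\mathscr H=\mathbb R^{4n}\times\mathbb R$ with vector fields $X_{2l-1}=\partial_{x_{2l-1}}-2x_{2l}\partial_t$, $X_{2l}=\partial_{x_{2l}}+2x_{2l-1}\partial_t$ ($l=1,\dots,2n$). For $l=0,\dots,n-1$: $Z_{l0'}=X_{4l+1}+\mathbf iX_{4l+2}$, $Z_{l1'}=-X_{4l+3}-\mathbf iX_{4l+4}$, $Z_{(n+l)0'}=X_{4l+3}-\mathbf iX_{4l+4}$, $Z_{(n+l)1'}=X_{4l+1}-\mathbf iX_{4l+2}$. Fix a basis $\omega^0,\dots,\omega^{2n-1}$ of $\mathbb C^{2n}$; $d_\alpha u=\sum_{A=0}^{2n-1}Z_{A\alpha'}u\,\omega^A$ ($\alpha=0,1$). For a quaternionic $k\times n$ matrix $\mathcal M=a+b\mathbf j$ ($a,b$ complex $k\times n$) put $\tau(\mathcal M)=\begin{pmatrix}a&-b\\\bar b&\bar a\end{pmatrix}$. A right $\mathbb H$-linear map $\eta:\mathbb H^n\to\mathbb H$ is a $1\times n$ quaternionic row; set $\eta^*\tilde\omega^p=\sum_{j=0}^{2n-1}\tau(\eta)_{pj}\omega^j$, $p=0,1$. An element of $\wedge^{2k}\mathbb C^{2n}$ is elementary strongly positive if it equals $\eta_1^*\tilde\omega^0\wedge\eta_1^*\tilde\omega^1\wedge\cdots\wedge\eta_k^*\tilde\omega^0\wedge\eta_k^*\tilde\omega^1$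 for some linearly independent right $\mathbb H$-linear maps $\eta_1,\dots,\eta_k:\mathbb H^n\to\mathbb H$. *)

theory Defs
  imports "HOL-Analysis.Analysis"
begin

(* Points of the quaternionic Heisenberg group H = R^{4n} x R.
   The coordinate x_{4l+r} (l = 0..n-1, r = 1..4) is  fst p $ l $ of_nat r,
   with the index l ranging over the finite type 'n (CARD('n) = n). *)
type_synonym 'n hpt = "(real^4^'n) \<times> real"

definition xc :: "'n::finite \<Rightarrow> nat \<Rightarrow> 'n hpt \<Rightarrow> real" where
  "xc l r p = fst p $ l $ of_nat r"

definition ex :: "'n::finite \<Rightarrow> nat \<Rightarrow> 'n hpt" where
  "ex l r = ((\<chi> l'. \<chi> r'. if l' = l \<and> r' = of_nat r then 1 else 0), 0)"

definition et :: "('n::finite) hpt" where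
  "et = (0, 1)"

(* value at p of the left invariant vector field X_{4l+r}:
   X_{2m-1} = d/dx_{2m-1} - 2 x_{2m} d/dt,  X_{2m} = d/dx_{2m} + 2 x_{2m-1} d/dt *)
definition Xvec :: "'n::finite \<Rightarrow> nat \<Rightarrow> 'n hpt \<Rightarrow> 'n hpt" where
  "Xvec l r p = (if odd r then ex l r - (2 * xc l (r + 1) p) *\<^sub>R et
                          else ex l r + (2 * xc l (r - 1) p) *\<^sub>R et)"

definition Xu :: "(('n::finite) hpt \<Rightarrow> real) \<Rightarrow> 'n \<Rightarrow> nat \<Rightarrow> 'n hpt \<Rightarrow> real" where
  "Xu u l r p = frechet_derivative u (at p) (Xvec l r p)"

(* Index A of the basis omega^0..omega^{2n-1}: (False,l) stands for A = l,
   (True,l) for A = n+l. A vector of C^{2n} is given by its coordinates. *)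
type_synonym 'n cvec = "bool \<times> 'n \<Rightarrow> complex"

definition Zu :: "(('n::finite) hpt \<Rightarrow> real) \<Rightarrow> bool \<times> 'n \<Rightarrow> nat \<Rightarrow> 'n hpt \<Rightarrow> complex" where
  "Zu u A \<alpha> p = (case A of
      (False, l) \<Rightarrow> (if \<alpha> = 0 then complex_of_real (Xu u l 1 p) + \<i> * complex_of_real (Xu u l 2 p)
                              else - complex_of_real (Xu u l 3 p) - \<i> * complex_of_real (Xu u l 4 p))
    | (True, l) \<Rightarrow> (if \<alpha> = 0 then complex_of_real (Xu u l 3 p) - \<i> * complex_of_real (Xu u l 4 p)
                              else complex_of_real (Xu u l 1 p) - \<i> * complex_of_real (Xu u l 2 p)))"

(* d_alpha u = sum_A Z_{A alpha'} u omega^A, as coordinate vector *)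
definition dform :: "(('n::finite) hpt \<Rightarrow> real) \<Rightarrow> nat \<Rightarrow> 'n hpt \<Rightarrow> 'n cvec" where
  "dform u \<alpha> p = (\<lambda>A. Zu u A \<alpha> p)"

(* Exterior product of m vectors, as an alternating m-form in the coordinates
   w.r.t. the basis omega^A:  (v_0 ^ ... ^ v_{m-1})(I) = det [ v_i (I j) ]. *)
definition wedge :: "'n cvec list \<Rightarrow> (nat \<Rightarrow> bool \<times> 'n) \<Rightarrow> complex" where
  "wedge vs I = (\<Sum>\<sigma> | \<sigma> permutes {..<length vs}.
       of_int (sign \<sigma>) * (\<Prod>i<length vs. (vs ! i) (I (\<sigma> i))))"

(* A quaternionic 1 x n row M = a + b j (a, b complex 1 x n), i.e. a right
   H-linear map H^n -> H, represented by the pair (a, b). *)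
type_synonym 'n qrow = "(complex^'n) \<times> (complex^'n)"

(* rows of tau(M) = [[a, -b], [conj b, conj a]]: eta^* tilde-omega^p *)
definition pullback :: "('n::finite) qrow \<Rightarrow> nat \<Rightarrow> 'n cvec" where
  "pullback M p = (\<lambda>A. case A of
      (False, l) \<Rightarrow> (if p = 0 then fst M $ l else cnj (snd M $ l))
    | (True, l) \<Rightarrow> (if p = 0 then - (snd M $ l) else cnj (fst M $ l)))"

(* left multiplication of a row by a quaternion q = c + d j:
   (c + d j)(a + b j) = (c a - d conj b) + (c b + d conj a) j *)
definition qscale :: "complex \<times> complex \<Rightarrow> ('n::finite) qrow \<Rightarrow> 'n qrow" where
  "qscale q M = ((\<chi> l. fst q * (fst M $ l) - snd q * cnj (snd M $ l)),
                 (\<chi> l. fst q * (snd M $ l) + snd q * cnj (fst M $ l)))"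

(* linear independence over H of right H-linear maps eta_1..eta_k
   (the space of such maps is a left H-module) *)
definition qlin_indep :: "('n::finite) qrow list \<Rightarrow> bool" where
  "qlin_indep Ms \<longleftrightarrow> (\<forall>qs. length qs = length Ms \<longrightarrow>
      (\<Sum>i<length Ms. qscale (qs ! i) (Ms ! i)) = 0 \<longrightarrow> (\<forall>i<length Ms. qs ! i = (0, 0)))"

definition elem_strongly_positive :: "nat \<Rightarrow> ((nat \<Rightarrow> bool \<times> 'n::finite) \<Rightarrow> complex) \<Rightarrow> bool" where
  "elem_strongly_positive k \<xi> \<longleftrightarrow> (\<exists>Ms. length Ms = k \<and> qlin_indep Ms \<and>
      \<xi> = wedge (concat (map (\<lambda>M. [pullback M 0, pullback M 1]) Ms)))"

end

theory Submission
  imports Defs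
begin

(* At each point, d_0 u and d_1 u are the two rows eta^* tilde-omega^0, eta^* tilde-omega^1 of
   tau(eta) for the single quaternionic row eta whose l-th entry is
   (X_{4l+1} u + i X_{4l+2} u) + (- X_{4l+3} u + i X_{4l+4} u) j.
   Hence d_0 u ^ d_1 u is elementary strongly positive as soon as eta is linearly independent,
   i.e. eta \<noteq> 0, which holds because H is a division ring and the horizontal gradient
   of u does not vanish. *)

(* The hypotheses say (c + d j)(a + b j) = 0; right multiplication by the conjugate of
   a + b j divides out its nonzero squared norm |a|^2 + |b|^2. *)
lemma quaternion_mult_eq_0_left:
  fixes a b c d :: complex
  assumes "a \<noteq> 0 \<or> b \<noteq> 0"
    and "c * a - d * cnj b = 0" and "c * b + d * cnj a = 0"
  shows "c = 0 \<and> d = 0"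
proof -
  have norm_sq: "a * cnj a + b * cnj b = complex_of_real ((cmod a)\<^sup>2 + (cmod b)\<^sup>2)"
    by (simp only: complex_norm_square[symmetric] of_real_add)
  have "(cmod a)\<^sup>2 + (cmod b)\<^sup>2 \<noteq> 0"
    using assms(1) by (simp add: add_nonneg_eq_0_iff)
  then have nonzero: "a * cnj a + b * cnj b \<noteq> 0"
    unfolding norm_sq of_real_eq_0_iff .
  have "c * (a * cnj a + b * cnj b) = cnj a * (c * a - d * cnj b) + cnj b * (c * b + d * cnj a)"
    by (simp add: algebra_simps)
  with assms(2,3) nonzero have "c = 0"
    by simp
  have "d * (a * cnj a + b * cnj b) = - b * (c * a - d * cnj b) + a * (c * b + d * cnj a)"
    by (simp add: algebra_simps)
  with assms(2,3) nonzero have "d = 0"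
    by simp
  with \<open>c = 0\<close> show ?thesis ..
qed

lemma qlin_indep_single_iff: "qlin_indep [M] \<longleftrightarrow> M \<noteq> 0"
proof
  assume indep: "qlin_indep [M]"
  have "qscale (1, 0) M \<noteq> 0"
  proof
    assume "qscale (1, 0) M = 0"
    then have "(\<Sum>i<length [M]. qscale ([(1, 0)] ! i) ([M] ! i)) = 0"
      by simp
    with indep[unfolded qlin_indep_def, rule_format, of "[(1, 0)]" 0]
    have "[(1, 0)] ! 0 = ((0, 0) :: complex \<times> complex)"
      by simp
    then show False
      by simp
  qed
  then show "M \<noteq> 0"
    by (auto simp: qscale_def zero_prod_def vec_eq_iff)
next
  assume "M \<noteq> 0"
  then obtain l where l: "fst M $ l \<noteq> 0 \<or> snd M $ l \<noteq> 0"
    by (auto simp: zero_prod_def vec_eq_iff prod_eq_iff)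
  show "qlin_indep [M]"
    unfolding qlin_indep_def
  proof (intro allI impI)
    fix qs :: "(complex \<times> complex) list" and i
    assume "length qs = length [M]" and "(\<Sum>i<length [M]. qscale (qs ! i) ([M] ! i)) = 0"
      and "i < length [M]"
    moreover obtain c d where cd: "qs ! 0 = (c, d)"
      by (cases "qs ! 0")
    ultimately have "i = 0" and "qscale (c, d) M = 0"
      by simp_all
    then have "c * fst M $ l - d * cnj (snd M $ l) = 0" and "c * snd M $ l + d * cnj (fst M $ l) = 0"
      by (auto simp: qscale_def zero_prod_def vec_eq_iff prod_eq_iff)
    then have "c = 0 \<and> d = 0"
      by (rule quaternion_mult_eq_0_left[OF l])
    with cd \<open>i = 0\<close> show "qs ! i = (0, 0)"
      by simp
  qed
qed

lemma elem_strongly_positive_wedge_pullback: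
  assumes "M \<noteq> 0"
  shows "elem_strongly_positive 1 (wedge [pullback M 0, pullback M 1])"
  unfolding elem_strongly_positive_def
  by (intro exI[of _ "[M]"]) (simp add: qlin_indep_single_iff assms)

definition horizontal_row :: "(('n::finite) hpt \<Rightarrow> real) \<Rightarrow> 'n hpt \<Rightarrow> 'n qrow" where
  "horizontal_row u p =
     ((\<chi> l. complex_of_real (Xu u l 1 p) + \<i> * complex_of_real (Xu u l 2 p)),
      (\<chi> l. - complex_of_real (Xu u l 3 p) + \<i> * complex_of_real (Xu u l 4 p)))"

lemma dform_eq_pullback_horizontal_row:
  "dform u \<alpha> p = pullback (horizontal_row u p) \<alpha>"
  by (auto intro!: ext simp: pullback_def dform_def Zu_def horizontal_row_def complex_eq_iff
      split: prod.splits bool.splits)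

lemma horizontal_row_eq_0_iff:
  "horizontal_row u p = 0 \<longleftrightarrow> (\<forall>l r. r \<in> {1..4} \<longrightarrow> Xu u l r p = 0)"
proof -
  have "r \<in> {1..4} \<longleftrightarrow> r = 1 \<or> r = 2 \<or> r = 3 \<or> r = (4::nat)" for r
    by auto
  then show ?thesis
    by (auto simp: horizontal_row_def zero_prod_def prod_eq_iff vec_eq_iff complex_eq_iff)
qed

theorem proposition4p2:
  fixes u :: "('n::finite) hpt \<Rightarrow> real" and D :: "'n hpt set"
    and u' :: "'n hpt \<Rightarrow> 'n hpt \<Rightarrow>\<^sub>L real" and p :: "'n hpt"
  assumes "open D" and "connected D"
    and "\<forall>q\<in>D. (u has_derivative blinfun_apply (u' q)) (at q)"
    and "continuous_on D u'"
    and "p \<in> D"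
    and "\<exists>l r. r \<in> {1..4} \<and> Xu u l r p \<noteq> 0"
  shows "elem_strongly_positive 1 (wedge [dform u 0 p, dform u 1 p])"
proof -
  have "horizontal_row u p \<noteq> 0"
    using assms(6) horizontal_row_eq_0_iff by blast
  then have "elem_strongly_positive 1
      (wedge [pullback (horizontal_row u p) 0, pullback (horizontal_row u p) 1])"
    by (rule elem_strongly_positive_wedge_pullback)
  then show ?thesis
    by (simp only: dform_eq_pullback_horizontal_row)
qed

end
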